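(* Let $\mathcal{F}=(W,\preceq,\mathcal{V})$ be a finite poset model and $w_1,w_2\in W$. Then $w_1\equiv_\eta w_2$ if and only if $w_1\approx_\pm w_2$.
   Context: Fix a set PL of proposition letters. A poset model is $\mathcal{F}=(W,\preceq,\mathcal{V})$ with $(W,\preceq)$ a partial order and $\mathcal{V}:\mathrm{PL}\to\mathcal{P}(W)$. $[m;n]=\{i\in\mathbb{N}:m\le i\le n\}$, $[m;n)=\{i:m\le i<n\}$. An undirected path of length $\ell$ from $w$ is $\pi:[0;\ell]\to W$ with $\pi(0)=w$ and, for each $i\in[0;\ell)$, $\pi(i)\preceq\pi(i+1)$ or $\pi(i+1)\preceq\pi(i)$. A $\downarrow$-path is an undirected path of length $\ell\ge1$ with $\pi(\ell)\preceq\pi(\ell-1)$. A $\pm$-path is a $\downarrow$-path of length $\ell\ge2$ with $\pi(0)\preceq\pi(1)$. SLCS$_\eta$ formulas: $\Phi::=p\mid\neg\Phi\mid\Phi_1\wedge\Phi_2\mid\eta(\Phi_1,\Phi_2)$; $w\models p$ iff $w\in\mathcal{V}(p)$; negation, conjunction standard; $w\models\eta(\Phi_1,\Phi_2)$ iff some $\pm$-path $\pi:[0;\ell]\to W$ from $w$ has $\pi(\ell)\models\Phi_2$ and $\pi(i)\models\Phi_1$ for all $i\in[0;\ell)$. $w_1\equiv_\eta w_2$ means $w_1,w_2$ satisfy the same SLCS$_\eta$ formulas. A weak $\pm$-bisimulation is a symmetric relation $B\subseteq W\times W$ such that whenever $B(w_1,w_2)$: (1) for every $p$, $w_1\in\mathcal{V}(p)$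 iff $w_2\in\mathcal{V}(p)$; (2) for all $u_1,d_1\in W$ with ($w_1\preceq u_1$ or $u_1\preceq w_1$) and $d_1\preceq u_1$, there is a $\pm$-path $\pi_2:[0;\ell_2]\to W$ from $w_2$ with $B(d_1,\pi_2(\ell_2))$ and, for all $j\in[0;\ell_2)$, $B(w_1,\pi_2(j))$ or $B(u_1,\pi_2(j))$. $w_1\approx_\pm w_2$ iff some weak $\pm$-bisimulation contains $(w_1,w_2)$. *)

theory Defs
  imports Main
begin

definition poset_model :: "'w set \<Rightarrow> ('w \<Rightarrow> 'w \<Rightarrow> bool) \<Rightarrow> ('p \<Rightarrow> 'w set) \<Rightarrow> bool" where
  "poset_model W le V \<longleftrightarrow>
     (\<forall>x\<in>W. le x x) \<and>
     (\<forall>x\<in>W. \<forall>y\<in>W. le x y \<and> le y x \<longrightarrow> x = y) \<and>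
     (\<forall>x\<in>W. \<forall>y\<in>W. \<forall>z\<in>W. le x y \<and> le y z \<longrightarrow> le x z) \<and>
     (\<forall>p. V p \<subseteq> W)"

datatype 'p slcs_eta =
    Prop 'p
  | Neg "'p slcs_eta"
  | Conj "'p slcs_eta" "'p slcs_eta"
  | Eta "'p slcs_eta" "'p slcs_eta"

definition undirected_path :: "'w set \<Rightarrow> ('w \<Rightarrow> 'w \<Rightarrow> bool) \<Rightarrow> (nat \<Rightarrow> 'w) \<Rightarrow> nat \<Rightarrow> 'w \<Rightarrow> bool" where
  "undirected_path W le \<pi> l w \<longleftrightarrow>
     (\<forall>i\<le>l. \<pi> i \<in> W) \<and> \<pi> 0 = w \<and>
     (\<forall>i<l. le (\<pi> i) (\<pi> (Suc i)) \<or> le (\<pi> (Suc i)) (\<pi> i))"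

definition down_path :: "'w set \<Rightarrow> ('w \<Rightarrow> 'w \<Rightarrow> bool) \<Rightarrow> (nat \<Rightarrow> 'w) \<Rightarrow> nat \<Rightarrow> 'w \<Rightarrow> bool" where
  "down_path W le \<pi> l w \<longleftrightarrow>
     undirected_path W le \<pi> l w \<and> l \<ge> 1 \<and> le (\<pi> l) (\<pi> (l - 1))"

definition pm_path :: "'w set \<Rightarrow> ('w \<Rightarrow> 'w \<Rightarrow> bool) \<Rightarrow> (nat \<Rightarrow> 'w) \<Rightarrow> nat \<Rightarrow> 'w \<Rightarrow> bool" where
  "pm_path W le \<pi> l w \<longleftrightarrow>
     down_path W le \<pi> l w \<and> l \<ge> 2 \<and> le (\<pi> 0) (\<pi> 1)"

fun sat :: "'w set \<Rightarrow> ('w \<Rightarrow> 'w \<Rightarrow> bool) \<Rightarrow> ('p \<Rightarrow> 'w set) \<Rightarrow> 'w \<Rightarrow> 'p slcs_eta \<Rightarrow> bool" where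
  "sat W le V w (Prop p) \<longleftrightarrow> w \<in> V p"
| "sat W le V w (Neg \<Phi>) \<longleftrightarrow> \<not> sat W le V w \<Phi>"
| "sat W le V w (Conj \<Phi>1 \<Phi>2) \<longleftrightarrow> sat W le V w \<Phi>1 \<and> sat W le V w \<Phi>2"
| "sat W le V w (Eta \<Phi>1 \<Phi>2) \<longleftrightarrow>
     (\<exists>\<pi> l. pm_path W le \<pi> l w \<and> sat W le V (\<pi> l) \<Phi>2 \<and> (\<forall>i<l. sat W le V (\<pi> i) \<Phi>1))"

definition eta_equiv :: "'w set \<Rightarrow> ('w \<Rightarrow> 'w \<Rightarrow> bool) \<Rightarrow> ('p \<Rightarrow> 'w set) \<Rightarrow> 'w \<Rightarrow> 'w \<Rightarrow> bool" where
  "eta_equiv W le V w1 w2 \<longleftrightarrow> (\<forall>\<Phi>. sat W le V w1 \<Phi> \<longleftrightarrow> sat W le V w2 \<Phi>)"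

definition weak_pm_bisim :: "'w set \<Rightarrow> ('w \<Rightarrow> 'w \<Rightarrow> bool) \<Rightarrow> ('p \<Rightarrow> 'w set) \<Rightarrow> ('w \<Rightarrow> 'w \<Rightarrow> bool) \<Rightarrow> bool" where
  "weak_pm_bisim W le V B \<longleftrightarrow>
     (\<forall>x y. B x y \<longrightarrow> x \<in> W \<and> y \<in> W) \<and>
     (\<forall>x y. B x y \<longrightarrow> B y x) \<and>
     (\<forall>w1 w2. B w1 w2 \<longrightarrow>
        (\<forall>p. w1 \<in> V p \<longleftrightarrow> w2 \<in> V p) \<and>
        (\<forall>u1\<in>W. \<forall>d1\<in>W. (le w1 u1 \<or> le u1 w1) \<and> le d1 u1 \<longrightarrow>
           (\<exists>\<pi>2 l2. pm_path W le \<pi>2 l2 w2 \<and> B d1 (\<pi>2 l2) \<and>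
              (\<forall>j<l2. B w1 (\<pi>2 j) \<or> B u1 (\<pi>2 j)))))"

definition weak_pm_bisimilar :: "'w set \<Rightarrow> ('w \<Rightarrow> 'w \<Rightarrow> bool) \<Rightarrow> ('p \<Rightarrow> 'w set) \<Rightarrow> 'w \<Rightarrow> 'w \<Rightarrow> bool" where
  "weak_pm_bisimilar W le V w1 w2 \<longleftrightarrow> (\<exists>B. weak_pm_bisim W le V B \<and> B w1 w2)"

end

theory Submission
  imports Defs
begin

text \<open>A \<plusminus>-path witnessing \<open>\<eta>(\<Phi>\<^sub>1, \<Phi>\<^sub>2)\<close> is matched
  step by step through the bisimulation; a downward step \<open>\<pi> i \<succeq> \<pi> (i+1)\<close> is an instance of the
  zig condition with \<open>u = \<pi> i\<close>, an upward step (never the last one) one with \<open>u = d = \<pi> (i+1)\<close>,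
  and the resulting \<plusminus>-paths are concatenated.
  Completeness: in a finite model every world \<open>x\<close> has a characteristic formula \<open>\<chi>\<^sub>x\<close>. For
  \<open>w \<preceq> u\<close> or \<open>u \<preceq> w\<close> and \<open>d \<preceq> u\<close> the path \<open>w, u, d\<close> (resp. \<open>w, w, u, d\<close>) shows
  \<open>w \<Turnstile> \<eta>(\<chi>\<^sub>w \<or> \<chi>\<^sub>u, \<chi>\<^sub>d)\<close>; an equivalent world satisfies the same formula, and its witnessing
  path is exactly what the zig condition for \<open>\<equiv>\<^sub>\<eta>\<close> asks for.\<close>

lemma pm_path_iff:
  "pm_path W le \<pi> l w \<longleftrightarrow>
     (\<forall>i\<le>l. \<pi> i \<in> W) \<and> \<pi> 0 = w \<and> (\<forall>i<l. le (\<pi> i) (\<pi> (Suc i)) \<or> le (\<pi> (Suc i)) (\<pi> i)) \<and>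
     2 \<le> l \<and> le (\<pi> 0) (\<pi> 1) \<and> le (\<pi> l) (\<pi> (l - 1))"
  unfolding pm_path_def down_path_def undirected_path_def by auto

lemma pm_path_append:
  assumes p1: "pm_path W le \<pi>1 l1 w" and p2: "pm_path W le \<pi>2 l2 (\<pi>1 l1)"
  shows "pm_path W le (\<lambda>i. if i \<le> l1 then \<pi>1 i else \<pi>2 (i - l1)) (l1 + l2) w"
    (is "pm_path W le ?\<pi> _ _")
proof -
  have tail: "?\<pi> i = \<pi>2 (i - l1)" if "l1 \<le> i" for i
    using that p2 by (auto simp: pm_path_iff)
  have steps: "le (?\<pi> i) (?\<pi> (Suc i)) \<or> le (?\<pi> (Suc i)) (?\<pi> i)" if "i < l1 + l2" for i
  proof (cases "i < l1")
    case True
    then show ?thesis using p1 by (auto simp: pm_path_iff)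
  next
    case False
    then have "?\<pi> i = \<pi>2 (i - l1)" "?\<pi> (Suc i) = \<pi>2 (Suc (i - l1))" "i - l1 < l2"
      using tail[of i] tail[of "Suc i"] that by (auto simp: Suc_diff_le)
    then show ?thesis using p2 by (auto simp: pm_path_iff)
  qed
  have inW: "?\<pi> i \<in> W" if "i \<le> l1 + l2" for i
    using that p1 p2 tail[of i] by (cases "i \<le> l1") (auto simp: pm_path_iff)
  have "2 \<le> l1" "2 \<le> l2"
    using p1 p2 by (auto simp: pm_path_iff)
  then have "le (?\<pi> 0) (?\<pi> 1)" "le (?\<pi> (l1 + l2)) (?\<pi> (l1 + l2 - 1))"
    using p1 p2 tail[of "l1 + l2"] tail[of "l1 + l2 - 1"] by (auto simp: pm_path_iff)
  moreover have "?\<pi> 0 = w"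
    using p1 by (simp add: pm_path_iff)
  moreover have "2 \<le> l1 + l2"
    using \<open>2 \<le> l1\<close> by simp
  ultimately show ?thesis
    unfolding pm_path_iff by (intro conjI allI impI inW steps) assumption+
qed

definition pm_reach :: "'w set \<Rightarrow> ('w \<Rightarrow> 'w \<Rightarrow> bool) \<Rightarrow> ('w \<Rightarrow> bool) \<Rightarrow> 'w \<Rightarrow> 'w \<Rightarrow> bool" where
  "pm_reach W le P y z \<longleftrightarrow> (\<exists>\<pi> l. pm_path W le \<pi> l y \<and> \<pi> l = z \<and> (\<forall>i<l. P (\<pi> i)))"

lemma sat_Eta_iff_pm_reach:
  "sat W le V w (Eta \<Phi>1 \<Phi>2) \<longleftrightarrow>
     (\<exists>z. pm_reach W le (\<lambda>v. sat W le V v \<Phi>1) w z \<and> sat W le V z \<Phi>2)"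
  unfolding pm_reach_def by auto

lemma pm_reach_trans:
  assumes "pm_reach W le P x y" and "pm_reach W le P y z"
  shows "pm_reach W le P x z"
proof -
  obtain \<pi>1 l1 where p1: "pm_path W le \<pi>1 l1 x" "\<pi>1 l1 = y" "\<forall>i<l1. P (\<pi>1 i)"
    using assms(1) unfolding pm_reach_def by blast
  obtain \<pi>2 l2 where p2: "pm_path W le \<pi>2 l2 y" "\<pi>2 l2 = z" "\<forall>i<l2. P (\<pi>2 i)"
    using assms(2) unfolding pm_reach_def by blast
  let ?\<pi> = "\<lambda>i. if i \<le> l1 then \<pi>1 i else \<pi>2 (i - l1)"
  have "pm_path W le ?\<pi> (l1 + l2) x"
    using pm_path_append[OF p1(1)] p1(2) p2(1) by simp
  moreover have "?\<pi> (l1 + l2) = z"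
    using p1(2) p2 by (auto simp: pm_path_iff)
  moreover have "P (?\<pi> i)" if "i < l1 + l2" for i
  proof (cases "i < l1")
    case False
    have "0 < l2" and "\<pi>2 0 = y"
      using p2(1) by (auto simp: pm_path_iff)
    with False that p1(2) p2(3) show ?thesis
      by (cases "i = l1") auto
  qed (use p1(3) in auto)
  ultimately show ?thesis unfolding pm_reach_def by blast
qed

lemma pm_reach_in_carrier:
  assumes "pm_reach W le P y z"
  shows "z \<in> W"
  using assms unfolding pm_reach_def pm_path_iff by auto

lemma pm_reach_mono:
  assumes "pm_reach W le P y z" and "\<And>v. v \<in> W \<Longrightarrow> P v \<Longrightarrow> Q v"
  shows "pm_reach W le Q y z"
proof -
  obtain \<pi> l where \<pi>: "pm_path W le \<pi> l y" "\<pi> l = z" "\<forall>i<l. P (\<pi> i)"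
    using assms(1) unfolding pm_reach_def by blast
  have "\<forall>i<l. Q (\<pi> i)"
    using \<pi> assms(2) unfolding pm_path_iff by auto
  with \<pi> show ?thesis unfolding pm_reach_def by blast
qed

lemma pm_reach_via:
  assumes reflexive: "\<forall>x\<in>W. le x x"
    and "w \<in> W" "u \<in> W" "d \<in> W" and "le w u \<or> le u w" and "le d u"
  shows "pm_reach W le (\<lambda>v. v = w \<or> v = u) w d"
proof (cases "le w u")
  case True
  let ?\<pi> = "\<lambda>i::nat. if i = 0 then w else if i = 1 then u else d"
  have "pm_path W le ?\<pi> 2 w"
    using True assms by (auto simp: pm_path_iff less_Suc_eq)
  then show ?thesis unfolding pm_reach_def
    by (intro exI[of _ ?\<pi>] exI[of _ 2]) (auto simp: less_Suc_eq)
next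
  case False
  let ?\<pi> = "\<lambda>i::nat. if i \<le> 1 then w else if i = 2 then u else d"
  have "pm_path W le ?\<pi> 3 w"
    using False assms by (auto simp: pm_path_iff less_Suc_eq)
  then show ?thesis unfolding pm_reach_def
    by (intro exI[of _ ?\<pi>] exI[of _ 3]) (auto simp: less_Suc_eq)
qed

lemma weak_pm_bisim_zig:
  assumes bisim: "weak_pm_bisim W le V B" and B_ab: "B a b"
    and "u \<in> W" "d \<in> W" "le a u \<or> le u a" "le d u"
  shows "\<exists>\<pi> l. pm_path W le \<pi> l b \<and> B d (\<pi> l) \<and> (\<forall>j<l. B a (\<pi> j) \<or> B u (\<pi> j))"
  using assms unfolding weak_pm_bisim_def by blast

lemma weak_pm_bisim_pm_step:
  assumes bisim: "weak_pm_bisim W le V B"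
    and inv: "\<And>x y. B x y \<Longrightarrow> P x \<longleftrightarrow> P y"
    and B_ab: "B a b" and "u \<in> W" "d \<in> W" "le a u \<or> le u a" "le d u" and "P a" "P u"
  shows "\<exists>z. B d z \<and> pm_reach W le P b z"
proof -
  obtain \<pi> l where \<pi>: "pm_path W le \<pi> l b" "B d (\<pi> l)" "\<forall>j<l. B a (\<pi> j) \<or> B u (\<pi> j)"
    using weak_pm_bisim_zig[OF bisim B_ab assms(4-7)] by blast
  have "P (\<pi> j)" if "j < l" for j
    using \<pi>(3) that inv[of a "\<pi> j"] inv[of u "\<pi> j"] \<open>P a\<close> \<open>P u\<close> by blast
  with \<pi>(1,2) show ?thesis unfolding pm_reach_def by blast
qed

lemma weak_pm_bisim_pm_reach:
  assumes reflexive: "\<forall>x\<in>W. le x x" and bisim: "weak_pm_bisim W le V B"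
    and inv: "\<And>x y. B x y \<Longrightarrow> P x \<longleftrightarrow> P y"
    and B_xy: "B x y" and reach: "pm_reach W le P x z"
  shows "\<exists>z'. B z z' \<and> pm_reach W le P y z'"
proof -
  obtain \<pi> l where \<pi>: "pm_path W le \<pi> l x" "\<pi> l = z" "\<forall>i<l. P (\<pi> i)"
    using reach unfolding pm_reach_def by blast
  have inW: "\<And>i. i \<le> l \<Longrightarrow> \<pi> i \<in> W" and "\<pi> 0 = x" and "2 \<le> l"
    and steps: "\<And>i. i < l \<Longrightarrow> le (\<pi> i) (\<pi> (Suc i)) \<or> le (\<pi> (Suc i)) (\<pi> i)"
    and last: "le (\<pi> l) (\<pi> (l - 1))"
    using \<pi>(1) unfolding pm_path_iff by auto
  have match_step: "\<exists>z'. B (\<pi> (Suc i)) z' \<and> pm_reach W le P z z'"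
    if "i < l" and B_z: "B (\<pi> i) z" for i z
  proof -
    have "\<pi> i \<in> W" "\<pi> (Suc i) \<in> W" "P (\<pi> i)"
      using that inW \<pi>(3) by auto
    show ?thesis
    proof (cases "le (\<pi> (Suc i)) (\<pi> i)")
      case True
      show ?thesis
        by (rule weak_pm_bisim_pm_step[OF bisim inv B_z, where u = "\<pi> i"])
          (use True reflexive \<open>\<pi> i \<in> W\<close> \<open>\<pi> (Suc i) \<in> W\<close> \<open>P (\<pi> i)\<close> in auto)
    next
      case False
      have "Suc i \<noteq> l"
        using False last by auto
      then have "P (\<pi> (Suc i))"
        using \<open>i < l\<close> \<pi>(3) by simp
      have "le (\<pi> i) (\<pi> (Suc i))"
        using False steps[OF \<open>i < l\<close>] by blast
      show ?thesis
        by (rule weak_pm_bisim_pm_step[OF bisim inv B_z, where u = "\<pi> (Suc i)"])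
          (use reflexive \<open>\<pi> i \<in> W\<close> \<open>\<pi> (Suc i) \<in> W\<close> \<open>P (\<pi> i)\<close> \<open>P (\<pi> (Suc i))\<close>
             \<open>le (\<pi> i) (\<pi> (Suc i))\<close> in auto)
    qed
  qed
  have "\<exists>z'. B (\<pi> (Suc k)) z' \<and> pm_reach W le P y z'" if "k < l" for k
    using that
  proof (induction k)
    case 0
    show ?case
      using match_step[OF 0] B_xy \<open>\<pi> 0 = x\<close> by simp
  next
    case (Suc k)
    then obtain z where z: "B (\<pi> (Suc k)) z" "pm_reach W le P y z"
      using Suc_lessD by blast
    moreover obtain z' where "B (\<pi> (Suc (Suc k))) z'" "pm_reach W le P z z'"
      using match_step[OF Suc.prems z(1)] by blast
    ultimately show ?case
      using pm_reach_trans[OF z(2)] by blast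
  qed
  from this[of "l - 1"] show ?thesis
    using \<pi>(2) \<open>2 \<le> l\<close> by simp
qed

lemma weak_pm_bisim_preserves_sat:
  assumes reflexive: "\<forall>x\<in>W. le x x" and bisim: "weak_pm_bisim W le V B"
  shows "B x y \<Longrightarrow> sat W le V x \<Phi> \<longleftrightarrow> sat W le V y \<Phi>"
proof (induction \<Phi> arbitrary: x y)
  case (Prop p)
  then show ?case using bisim unfolding weak_pm_bisim_def by auto
next
  case (Eta \<Phi>1 \<Phi>2)
  have transfer: "sat W le V y' (Eta \<Phi>1 \<Phi>2)"
    if B_xy': "B x' y'" and sat_x': "sat W le V x' (Eta \<Phi>1 \<Phi>2)" for x' y'
  proof -
    obtain z where z: "pm_reach W le (\<lambda>v. sat W le V v \<Phi>1) x' z" "sat W le V z \<Phi>2"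
      using sat_x' unfolding sat_Eta_iff_pm_reach by blast
    obtain z' where "B z z'" "pm_reach W le (\<lambda>v. sat W le V v \<Phi>1) y' z'"
      using weak_pm_bisim_pm_reach[of W le V B, OF reflexive bisim Eta.IH(1) B_xy' z(1)] by blast
    with z(2) Eta.IH(2) show ?thesis unfolding sat_Eta_iff_pm_reach by blast
  qed
  have "B y x" using Eta.prems bisim unfolding weak_pm_bisim_def by blast
  with Eta.prems transfer show ?case by blast
qed auto

definition Disj :: "'p slcs_eta \<Rightarrow> 'p slcs_eta \<Rightarrow> 'p slcs_eta" where
  "Disj \<Phi> \<Psi> = Neg (Conj (Neg \<Phi>) (Neg \<Psi>))"

lemma sat_Disj [simp]: "sat W le V x (Disj \<Phi> \<Psi>) \<longleftrightarrow> sat W le V x \<Phi> \<or> sat W le V x \<Psi>"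
  unfolding Disj_def by simp

lemma distinguishing_formula:
  assumes "\<not> eta_equiv W le V x y"
  obtains \<delta> where "sat W le V x \<delta>" and "\<not> sat W le V y \<delta>"
proof -
  obtain \<Phi> where "sat W le V x \<Phi> \<noteq> sat W le V y \<Phi>"
    using assms unfolding eta_equiv_def by blast
  then show thesis
    using that[of \<Phi>] that[of "Neg \<Phi>"] by auto
qed

lemma characteristic_formula_on:
  assumes "finite S"
  shows "\<exists>\<chi>. sat W le V x \<chi> \<and> (\<forall>z\<in>S. sat W le V z \<chi> \<longrightarrow> eta_equiv W le V x z)"
  using assms
proof (induction S rule: finite_induct)
  case empty
  show ?case by (rule exI[of _ "Neg (Conj (Prop undefined) (Neg (Prop undefined)))"]) auto
next
  case (insert a S)
  then obtain \<chi> where \<chi>: "sat W le V x \<chi>" "\<forall>z\<in>S. sat W le V z \<chi> \<longrightarrow> eta_equiv W le V x z"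
    by blast
  show ?case
  proof (cases "eta_equiv W le V x a")
    case True
    with \<chi> show ?thesis by auto
  next
    case False
    then obtain \<delta> where "sat W le V x \<delta>" "\<not> sat W le V a \<delta>"
      by (rule distinguishing_formula)
    with \<chi> show ?thesis by (intro exI[of _ "Conj \<chi> \<delta>"]) auto
  qed
qed

lemma characteristic_formula:
  assumes "finite W"
  obtains \<chi> where "\<And>z. z \<in> W \<Longrightarrow> sat W le V z \<chi> \<longleftrightarrow> eta_equiv W le V x z"
proof -
  obtain \<chi> where "sat W le V x \<chi>" "\<forall>z\<in>W. sat W le V z \<chi> \<longrightarrow> eta_equiv W le V x z"
    using characteristic_formula_on[OF assms] by blast
  then show thesis
    using that[of \<chi>] unfolding eta_equiv_def by blast
qed

lemma eta_equiv_weak_pm_bisim: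
  assumes reflexive: "\<forall>x\<in>W. le x x" and fin: "finite W"
  shows "weak_pm_bisim W le V (\<lambda>x y. x \<in> W \<and> y \<in> W \<and> eta_equiv W le V x y)"
    (is "weak_pm_bisim W le V ?E")
proof -
  have zig: "\<exists>\<pi> l. pm_path W le \<pi> l w2 \<and> ?E d (\<pi> l) \<and> (\<forall>j<l. ?E w1 (\<pi> j) \<or> ?E u (\<pi> j))"
    if E: "?E w1 w2" and "u \<in> W" "d \<in> W" "le w1 u \<or> le u w1" "le d u" for w1 w2 u d
  proof -
    obtain \<chi>w where \<chi>w: "\<And>z. z \<in> W \<Longrightarrow> sat W le V z \<chi>w \<longleftrightarrow> eta_equiv W le V w1 z"
      using characteristic_formula[OF fin] by blast
    obtain \<chi>u where \<chi>u: "\<And>z. z \<in> W \<Longrightarrow> sat W le V z \<chi>u \<longleftrightarrow> eta_equiv W le V u z"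
      using characteristic_formula[OF fin] by blast
    obtain \<chi>d where \<chi>d: "\<And>z. z \<in> W \<Longrightarrow> sat W le V z \<chi>d \<longleftrightarrow> eta_equiv W le V d z"
      using characteristic_formula[OF fin] by blast
    have refl_equiv: "\<And>x. eta_equiv W le V x x"
      by (simp add: eta_equiv_def)
    let ?\<Phi> = "Eta (Disj \<chi>w \<chi>u) \<chi>d"
    have "pm_reach W le (\<lambda>v. v = w1 \<or> v = u) w1 d"
      using pm_reach_via[of W le w1 u d] reflexive E that(2-5) by blast
    then have "pm_reach W le (\<lambda>v. sat W le V v (Disj \<chi>w \<chi>u)) w1 d"
      by (rule pm_reach_mono) (use \<chi>w \<chi>u refl_equiv in auto)
    then have "sat W le V w1 ?\<Phi>"
      unfolding sat_Eta_iff_pm_reach using \<chi>d[OF \<open>d \<in> W\<close>] refl_equiv by blast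
    then have "sat W le V w2 ?\<Phi>"
      using E unfolding eta_equiv_def by blast
    then obtain z where z: "pm_reach W le (\<lambda>v. sat W le V v (Disj \<chi>w \<chi>u)) w2 z" "sat W le V z \<chi>d"
      unfolding sat_Eta_iff_pm_reach by blast
    have "pm_reach W le (\<lambda>v. ?E w1 v \<or> ?E u v) w2 z"
      using z(1) by (rule pm_reach_mono) (use \<chi>w \<chi>u E \<open>u \<in> W\<close> in auto)
    moreover have "?E d z"
      using z(2) \<chi>d[OF pm_reach_in_carrier[OF z(1)]] pm_reach_in_carrier[OF z(1)] \<open>d \<in> W\<close> by blast
    ultimately show ?thesis unfolding pm_reach_def by blast
  qed
  have same_letters: "w1 \<in> V p \<longleftrightarrow> w2 \<in> V p" if "?E w1 w2" for w1 w2 p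
  proof -
    have "sat W le V w1 (Prop p) \<longleftrightarrow> sat W le V w2 (Prop p)"
      using that unfolding eta_equiv_def by blast
    then show ?thesis by simp
  qed
  have sym: "?E y x" if "?E x y" for x y
    using that unfolding eta_equiv_def by auto
  show ?thesis
    unfolding weak_pm_bisim_def
  proof (intro conjI allI impI ballI)
    fix w1 w2 u d
    assume "?E w1 w2" "u \<in> W" "d \<in> W" "(le w1 u \<or> le u w1) \<and> le d u"
    then show "\<exists>\<pi> l. pm_path W le \<pi> l w2 \<and> ?E d (\<pi> l) \<and> (\<forall>j<l. ?E w1 (\<pi> j) \<or> ?E u (\<pi> j))"
      using zig by blast
  qed (use same_letters sym in auto)
qed

theorem theorem3:
  fixes W :: "'w set" and le :: "'w \<Rightarrow> 'w \<Rightarrow> bool" and V :: "'p \<Rightarrow> 'w set"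
  assumes "poset_model W le V" and "finite W"
    and "w1 \<in> W" and "w2 \<in> W"
  shows "eta_equiv W le V w1 w2 \<longleftrightarrow> weak_pm_bisimilar W le V w1 w2"
proof -
  have reflexive: "\<forall>x\<in>W. le x x"
    using assms(1) unfolding poset_model_def by blast
  show ?thesis
  proof
    assume "eta_equiv W le V w1 w2"
    then show "weak_pm_bisimilar W le V w1 w2"
      using eta_equiv_weak_pm_bisim[of W le V] reflexive assms(2-4)
      unfolding weak_pm_bisimilar_def by blast
  next
    assume "weak_pm_bisimilar W le V w1 w2"
    then obtain B where "weak_pm_bisim W le V B" "B w1 w2"
      unfolding weak_pm_bisimilar_def by blast
    then show "eta_equiv W le V w1 w2"
      using weak_pm_bisim_preserves_sat[of W le V B] reflexive unfolding eta_equiv_def by blast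
  qed
qed

end
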